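(* Let $L$ be a positive integer and let $a,b,s$ be integers with $a\mid L$, $b\mid L$, $0\le s<b$, $s\in\frac{ab}{\gcd(ab,L)}\mathbb{Z}$; let $\Lambda=\begin{pmatrix} a&0\\ s&b\end{pmatrix}\mathbb{Z}_L^2$, $\lambda_2=b/\gcd(b,s)$, $\tilde a=\lambda_2a$, and let $\tilde\Lambda$ be the subgroup of $\mathbb{Z}_L^2$ generated by $(\tilde a,0)^T$ and $(0,b)^T$. Let $g\in\mathbb{C}^L$ and for $0\le m<\lambda_2$ put $g_m=\mathbf M_{ms\bmod b}\mathbf T_{ma}g$. Then for all $f\in\mathbb{C}^L$ $$\mathbf S_{g,\Lambda}f=\sum_{m=0}^{\lambda_2-1}\mathbf S_{g_m,\tilde\Lambda}f .$$ Moreover, for all $f\in\mathbb{C}^L$, $n\in\{0,\dots,L/a-1\}$ and $k\in\{0,\dots,L/b-1\}$, writing $\tilde n=\lfloor n/\lambda_2\rfloor$ and $m=n-\lambda_2\tilde n$, $$\langle f,\mathbf M_{kb+(ms\bmod b)}\mathbf T_{na}g\rangle=e^{-2\pi i\tilde n\tilde a(ms\bmod b)/L}\,\langle f,\mathbf M_{kb}\mathbf T_{\tilde n\tilde a}g_m\rangle .$$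
   Context: Signals are vectors in $\mathbb{C}^L$ indexed by $\mathbb{Z}_L$, with $\langle f,h\rangle=\sum_{l=0}^{L-1}f(l)\overline{h(l)}$. $\mathbf T_xf(l)=f(l-x)$ (indices mod $L$), $\mathbf M_\omega f(l)=e^{2\pi il\omega/L}f(l)$, and $\pi(x,\omega)=\mathbf M_\omega\mathbf T_x$. For $h\in\mathbb{C}^L$ and a subgroup $\Gamma\le\mathbb{Z}_L^2$, the frame operator is $\mathbf S_{h,\Gamma}f=\sum_{(x,\omega)^T\in\Gamma}\langle f,\pi(x,\omega)h\rangle\,\pi(x,\omega)h$. $A\mathbb{Z}_L^2=\{Az\bmod L:z\in\mathbb{Z}_L^2\}$. *)

theory Defs
  imports Complex_Main
begin

text \<open>Signals in C^L are modelled as functions int => complex; only values at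
indices 0..L-1 enter the inner product, and translations read indices mod L.\<close>

type_synonym signal = "int \<Rightarrow> complex"

definition inner_L :: "int \<Rightarrow> signal \<Rightarrow> signal \<Rightarrow> complex" where
  "inner_L L f h = (\<Sum>l\<in>{0..<L}. f l * cnj (h l))"

definition transl :: "int \<Rightarrow> int \<Rightarrow> signal \<Rightarrow> signal" where
  "transl L x f = (\<lambda>l. f ((l - x) mod L))"

definition modul :: "int \<Rightarrow> int \<Rightarrow> signal \<Rightarrow> signal" where
  "modul L \<omega> f = (\<lambda>l. exp (2 * pi * \<i> * of_int l * of_int \<omega> / of_int L) * f l)"

definition tf_shift :: "int \<Rightarrow> int \<Rightarrow> int \<Rightarrow> signal \<Rightarrow> signal" where
  "tf_shift L x \<omega> f = modul L \<omega> (transl L x f)"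

definition frame_op :: "int \<Rightarrow> signal \<Rightarrow> (int \<times> int) set \<Rightarrow> signal \<Rightarrow> signal" where
  "frame_op L h \<Gamma> f = (\<lambda>l. \<Sum>(x,\<omega>)\<in>\<Gamma>.
      inner_L L f (tf_shift L x \<omega> h) * tf_shift L x \<omega> h l)"

definition mat_lattice :: "int \<Rightarrow> int \<Rightarrow> int \<Rightarrow> int \<Rightarrow> int \<Rightarrow> (int \<times> int) set" where
  "mat_lattice L a11 a12 a21 a22 =
     {((a11 * z1 + a12 * z2) mod L, (a21 * z1 + a22 * z2) mod L) | z1 z2. z1 \<in> {0..<L} \<and> z2 \<in> {0..<L}}"

definition gen_subgroup2 :: "int \<Rightarrow> int \<times> int \<Rightarrow> int \<times> int \<Rightarrow> (int \<times> int) set" where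
  "gen_subgroup2 L v w =
     {((i * fst v + j * fst w) mod L, (i * snd v + j * snd w) mod L) | i j :: int. True}"

end

theory Submission
  imports Defs
begin

text \<open>
  Time-frequency shifts compose up to a unimodular phase,
  pi(x,w) pi(x0,w0) = e^(-2 pi i x w0 / L) pi(x + x0, w + w0).
  This is the coefficient identity, and the phase cancels in every rank-one term
  <f, pi h> pi h of a frame operator, so shifting the window by (x0,w0) merely translates
  the index set. Above the time n a the lattice Lambda contains exactly the frequencies
  congruent to n s modulo b. Writing n = lambda2 t + m with 0 <= m < lambda2, this class
  depends only on m because b divides lambda2 s. Hence Lambda is the disjoint union of the
  translates of the rectangular lattice (lambda2 a) Z x b Z by (m a, m s mod b), and the
  frame operator splits accordingly.
\<close>

text \<open>For L = 0 the character is constantly 1 (division by zero), so the lemmas about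
  time-frequency shifts below need no hypothesis L \<noteq> 0.\<close>

definition char_ZL :: "int \<Rightarrow> int \<Rightarrow> complex" where
  "char_ZL L j = cis (2 * pi * j / L)"

lemma char_ZL_conv_exp: "char_ZL L j = exp (2 * pi * \<i> * j / L)"
  unfolding char_ZL_def cis_conv_exp by (simp add: mult_ac)

lemma char_ZL_add: "char_ZL L (j + k) = char_ZL L j * char_ZL L k"
  unfolding char_ZL_def cis_mult by (simp add: add_divide_distrib distrib_left)

lemma cnj_char_ZL: "cnj (char_ZL L j) = char_ZL L (- j)"
  unfolding char_ZL_def cis_cnj by simp

lemma char_ZL_mod: "char_ZL L (j mod L) = char_ZL L j"
proof -
  have "char_ZL L (L * (j div L)) = 1"
    using cis_multiple_2pi[OF Ints_of_int, of "j div L"]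
    by (cases "L = 0") (simp_all add: char_ZL_def mult.assoc)
  then show ?thesis
    by (metis char_ZL_add mult_div_mod_eq mult_1)
qed

lemma char_ZL_uminus_mult: "char_ZL L (- j) * char_ZL L j = 1"
  using char_ZL_add[of L "- j" j] by (simp add: char_ZL_def)

lemma inner_L_scale_right: "inner_L L f (\<lambda>l. c * h l) = cnj c * inner_L L f h"
  unfolding inner_L_def by (simp add: sum_distrib_left algebra_simps)

lemma tf_shift_apply: "tf_shift L x \<omega> g l = char_ZL L (l * \<omega>) * g ((l - x) mod L)"
  unfolding tf_shift_def modul_def transl_def char_ZL_conv_exp by (simp add: mult.assoc)

lemma tf_shift_mod_freq:
  "tf_shift L x (\<omega> mod L) g = tf_shift L x \<omega> g"
proof
  fix l
  have "char_ZL L (l * (\<omega> mod L)) = char_ZL L (l * \<omega>)"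
    using char_ZL_mod by (metis mod_mult_right_eq)
  then show "tf_shift L x (\<omega> mod L) g l = tf_shift L x \<omega> g l"
    by (simp add: tf_shift_apply)
qed

lemma tf_shift_tf_shift:
  "tf_shift L x \<omega> (tf_shift L x0 \<omega>0 g)
       = (\<lambda>l. char_ZL L (- (x * \<omega>0)) * tf_shift L (x + x0) (\<omega> + \<omega>0) g l)"
proof
  fix l
  have "char_ZL L (((l - x) mod L) * \<omega>0) = char_ZL L ((l - x) * \<omega>0)"
    using char_ZL_mod by (metis mod_mult_left_eq)
  moreover have "((l - x) mod L - x0) mod L = (l - (x + x0)) mod L"
    by (simp add: mod_diff_left_eq algebra_simps)
  moreover have "char_ZL L (l * \<omega>) * char_ZL L ((l - x) * \<omega>0)
      = char_ZL L (- (x * \<omega>0)) * char_ZL L (l * (\<omega> + \<omega>0))"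
    by (simp add: char_ZL_add[symmetric] algebra_simps)
  ultimately show "tf_shift L x \<omega> (tf_shift L x0 \<omega>0 g) l
      = char_ZL L (- (x * \<omega>0)) * tf_shift L (x + x0) (\<omega> + \<omega>0) g l"
    by (simp add: tf_shift_apply mult.assoc[symmetric])
qed

lemma inner_L_tf_shift_tf_shift:
  "inner_L L f (tf_shift L x \<omega> (tf_shift L x0 \<omega>0 g))
       = char_ZL L (x * \<omega>0) * inner_L L f (tf_shift L (x + x0) (\<omega> + \<omega>0) g)"
  by (simp add: tf_shift_tf_shift inner_L_scale_right cnj_char_ZL)

lemma inner_L_modul_transl_split:
  "inner_L L f (modul L (\<omega> + r) (transl L (x + x0) g))
     = exp (- 2 * pi * \<i> * of_int x * of_int r / of_int L)
       * inner_L L f (modul L \<omega> (transl L x (modul L r (transl L x0 g))))"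
proof -
  have "exp (- 2 * pi * \<i> * of_int x * of_int r / of_int L) = char_ZL L (- (x * r))"
    by (simp add: char_ZL_conv_exp mult.assoc)
  then show ?thesis
    using char_ZL_uminus_mult[of L "x * r"]
    by (simp add: inner_L_tf_shift_tf_shift mult.assoc[symmetric] flip: tf_shift_def)
qed

definition frame_term :: "int \<Rightarrow> signal \<Rightarrow> signal \<Rightarrow> int \<Rightarrow> int \<Rightarrow> int \<Rightarrow> complex" where
  "frame_term L f h l x \<omega> = inner_L L f (tf_shift L x \<omega> h) * tf_shift L x \<omega> h l"

lemma frame_op_eq_sum: "frame_op L h \<Gamma> f l = (\<Sum>(x, \<omega>)\<in>\<Gamma>. frame_term L f h l x \<omega>)"
  unfolding frame_op_def frame_term_def ..

lemma frame_term_mod_freq: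
  "frame_term L f h l x (\<omega> mod L) = frame_term L f h l x \<omega>"
  unfolding frame_term_def by (simp add: tf_shift_mod_freq)

lemma frame_term_tf_shift_window:
  "frame_term L f (tf_shift L x0 \<omega>0 h) l x \<omega> = frame_term L f h l (x + x0) (\<omega> + \<omega>0)"
proof -
  let ?c = "char_ZL L (x * \<omega>0)" and ?I = "inner_L L f (tf_shift L (x + x0) (\<omega> + \<omega>0) h)"
    and ?v = "tf_shift L (x + x0) (\<omega> + \<omega>0) h l"
  have "frame_term L f (tf_shift L x0 \<omega>0 h) l x \<omega> = (char_ZL L (- (x * \<omega>0)) * ?c) * (?I * ?v)"
    unfolding frame_term_def inner_L_tf_shift_tf_shift
    unfolding tf_shift_tf_shift by (simp add: mult_ac)
  also have "\<dots> = frame_term L f h l (x + x0) (\<omega> + \<omega>0)"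
    unfolding char_ZL_uminus_mult frame_term_def by simp
  finally show ?thesis .
qed

definition residue_class :: "int \<Rightarrow> int \<Rightarrow> int \<Rightarrow> int set" where
  "residue_class L b c = {w \<in> {0..<L}. w mod b = c mod b}"

lemma residue_class_mod: "residue_class L b (c mod b) = residue_class L b c"
  unfolding residue_class_def by simp

lemma finite_residue_class [simp]: "finite (residue_class L b c)"
  unfolding residue_class_def by (rule finite_subset[where B = "{0..<L}"]) auto

lemma sum_residue_class_shift:
  fixes P :: "int \<Rightarrow> 'a::comm_monoid_add"
  assumes L: "0 < L" and "b dvd L" and P: "\<And>w. P (w mod L) = P w"
  shows "(\<Sum>w\<in>residue_class L b 0. P (w + r)) = (\<Sum>w\<in>residue_class L b r. P w)"
proof (rule sum.reindex_bij_witness[where j = "\<lambda>w. (w + r) mod L" and i = "\<lambda>w. (w - r) mod L"])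
  have mod_b: "x mod L mod b = x mod b" for x
    using \<open>b dvd L\<close> by (simp add: mod_mod_cancel)
  fix w
  show "(w + r) mod L \<in> residue_class L b r" if "w \<in> residue_class L b 0"
  proof -
    have "w mod b = 0"
      using that unfolding residue_class_def by simp
    then have "(w + r) mod b = r mod b"
      by (metis add_0 mod_add_left_eq)
    then show ?thesis
      using L unfolding residue_class_def by (simp add: mod_b)
  qed
  show "(w - r) mod L \<in> residue_class L b 0" if "w \<in> residue_class L b r"
  proof -
    have "(w - r) mod b = 0"
      using that mod_diff_cong[of w b r r r] unfolding residue_class_def by simp
    then show ?thesis
      using L unfolding residue_class_def by (simp add: mod_b)
  qed
  show "w \<in> residue_class L b 0 \<Longrightarrow> ((w + r) mod L - r) mod L = w"
    unfolding residue_class_def by (simp add: mod_diff_left_eq)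
  show "w \<in> residue_class L b r \<Longrightarrow> ((w - r) mod L + r) mod L = w"
    unfolding residue_class_def by (simp add: mod_add_left_eq)
  show "P ((w + r) mod L) = P (w + r)" by (rule P)
qed

text \<open>The hypothesis b dvd s * (L div a) makes the frequency class of n s independent of
  the representative of n modulo L div a.\<close>

lemma mat_lattice_lower_triangular_subset:
  fixes L a b s :: int
  assumes "0 < L" and a: "0 < a" "a dvd L" and b: "b dvd L" and s: "b dvd s * (L div a)"
  shows "mat_lattice L a 0 s b
       \<subseteq> (\<lambda>(n, w). (n * a, w)) ` (SIGMA n:{0..<L div a}. residue_class L b (n * s))"
proof
  define p where "p = L div a"
  have L: "L = p * a" using a by (simp add: p_def)
  fix y assume "y \<in> mat_lattice L a 0 s b"
  then obtain z1 z2 where y: "y = ((a * z1) mod L, (s * z1 + b * z2) mod L)"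
    unfolding mat_lattice_def by auto
  define n where "n = z1 mod p"
  have time: "(a * z1) mod L = n * a"
    unfolding L n_def by (simp add: mod_mult_mult2 mult.commute)
  obtain k where k: "s * p = b * k"
    using s unfolding p_def[symmetric] by blast
  have "s * z1 = s * (p * (z1 div p) + n)"
    by (simp add: n_def)
  also have "\<dots> = n * s + b * (k * (z1 div p))"
    by (simp add: algebra_simps flip: k)
  finally have "(s * z1 + b * z2) mod L mod b = n * s mod b"
    using b by (simp add: mod_mod_cancel)
  then have "(s * z1 + b * z2) mod L \<in> residue_class L b (n * s)"
    using \<open>0 < L\<close> unfolding residue_class_def by simp
  moreover have "0 < p"
    using \<open>0 < L\<close> a by (simp add: L zero_less_mult_iff)
  then have "n \<in> {0..<L div a}"
    unfolding n_def p_def[symmetric] by simp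
  ultimately show "y \<in> (\<lambda>(n, w). (n * a, w)) ` (SIGMA n:{0..<L div a}. residue_class L b (n * s))"
    using y time by (auto intro!: image_eqI[where x = "(n, (s * z1 + b * z2) mod L)"])
qed

lemma mat_lattice_lower_triangular_supset:
  fixes L a b s :: int
  assumes "0 < L" and a: "0 < a" "a dvd L"
  shows "(\<lambda>(n, w). (n * a, w)) ` (SIGMA n:{0..<L div a}. residue_class L b (n * s))
       \<subseteq> mat_lattice L a 0 s b"
proof
  define p where "p = L div a"
  have L: "L = p * a" using a by (simp add: p_def)
  fix y assume "y \<in> (\<lambda>(n, w). (n * a, w)) ` (SIGMA n:{0..<L div a}. residue_class L b (n * s))"
  then obtain n w where n: "0 \<le> n" "n < p" and w: "w \<in> residue_class L b (n * s)"
    and y: "y = (n * a, w)" unfolding p_def by auto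
  from w have w_range: "0 \<le> w" "w < L" and "b dvd w - n * s"
    unfolding residue_class_def by (auto simp: mod_eq_dvd_iff)
  then obtain j where j: "w = n * s + b * j"
    by (metis dvdE diff_add_cancel add.commute)
  have "n * a < L"
    using n a unfolding L by (simp add: mult_strict_right_mono)
  then have "(a * n + 0 * (j mod L)) mod L = n * a"
    using n a by (simp add: mult.commute)
  moreover have "(s * n + b * (j mod L)) mod L = w"
    using w_range j by (metis mod_add_right_eq mod_mult_right_eq mod_pos_pos_trivial mult.commute)
  moreover have "p \<le> L"
    using n a unfolding L by (simp add: mult_le_cancel_left1)
  then have "n \<in> {0..<L}" "j mod L \<in> {0..<L}"
    using n \<open>0 < L\<close> by auto
  ultimately show "y \<in> mat_lattice L a 0 s b"
    unfolding mat_lattice_def y by (metis (mono_tags, lifting) mem_Collect_eq)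
qed

lemma mat_lattice_lower_triangular:
  fixes L a b s :: int
  assumes "0 < L" "0 < a" "a dvd L" "b dvd L" "b dvd s * (L div a)"
  shows "mat_lattice L a 0 s b
       = (\<lambda>(n, w). (n * a, w)) ` (SIGMA n:{0..<L div a}. residue_class L b (n * s))"
  using mat_lattice_lower_triangular_subset[OF assms] mat_lattice_lower_triangular_supset[OF assms(1-3)]
  by (rule subset_antisym)

lemma gen_subgroup2_eq_mat_lattice:
  assumes "0 < L"
  shows "gen_subgroup2 L (p, q) (r, t) = mat_lattice L p r q t"
proof (intro set_eqI iffI)
  fix y assume "y \<in> gen_subgroup2 L (p, q) (r, t)"
  then obtain i j where y: "y = ((i * p + j * r) mod L, (i * q + j * t) mod L)"
    unfolding gen_subgroup2_def by auto
  have reduce: "(i * u + j * v) mod L = (u * (i mod L) + v * (j mod L)) mod L" for u v :: int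
    by (metis mod_add_cong mod_mult_right_eq mult.commute)
  have "y = ((p * (i mod L) + r * (j mod L)) mod L, (q * (i mod L) + t * (j mod L)) mod L)"
    unfolding y reduce ..
  moreover have "i mod L \<in> {0..<L}" "j mod L \<in> {0..<L}"
    using assms by auto
  ultimately show "y \<in> mat_lattice L p r q t"
    unfolding mat_lattice_def by blast
next
  fix y assume "y \<in> mat_lattice L p r q t"
  then obtain z1 z2 where "y = ((p * z1 + r * z2) mod L, (q * z1 + t * z2) mod L)"
    unfolding mat_lattice_def by blast
  then have "y = ((z1 * fst (p, q) + z2 * fst (r, t)) mod L, (z1 * snd (p, q) + z2 * snd (r, t)) mod L)"
    by (simp add: mult.commute)
  then show "y \<in> gen_subgroup2 L (p, q) (r, t)"
    unfolding gen_subgroup2_def by blast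
qed

lemma sum_mat_lattice_lower_triangular:
  fixes L a b s :: int and F :: "int \<Rightarrow> int \<Rightarrow> 'a::comm_monoid_add"
  assumes "0 < L" "0 < a" "a dvd L" "b dvd L" "b dvd s * (L div a)"
  shows "(\<Sum>(x, \<omega>)\<in>mat_lattice L a 0 s b. F x \<omega>)
       = (\<Sum>n\<in>{0..<L div a}. \<Sum>w\<in>residue_class L b (n * s). F (n * a) w)"
proof -
  have "inj_on (\<lambda>(n, w). (n * a, w)) (SIGMA n:{0..<L div a}. residue_class L b (n * s))"
    using \<open>0 < a\<close> by (auto simp: inj_on_def)
  then show ?thesis
    unfolding mat_lattice_lower_triangular[OF assms]
    by (simp add: sum.reindex sum.Sigma case_prod_unfold)
qed

lemma sum_interval_mult_split:
  fixes q p :: int and H :: "int \<Rightarrow> 'a::comm_monoid_add"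
  assumes q: "0 < q"
  shows "(\<Sum>n\<in>{0..<q * p}. H n) = (\<Sum>m\<in>{0..<q}. \<Sum>t\<in>{0..<p}. H (q * t + m))"
proof -
  have combine: "q * t + m < q * p" if "m < q" "t < p" for m t
  proof -
    have "q * t + m < q * (t + 1)" using that by (simp add: algebra_simps)
    also have "\<dots> \<le> q * p" using that q by (intro mult_left_mono) auto
    finally show ?thesis .
  qed
  have quotient: "n div q < p" if "0 \<le> n" "n < q * p" for n
  proof -
    have "q * (n div q) \<le> n"
      using q by (smt (verit) mult_div_mod_eq pos_mod_sign)
    with that have "q * (n div q) < q * p" by simp
    then show ?thesis
      using mult_less_cancel_left_pos[OF q] by simp
  qed
  have "(\<Sum>n\<in>{0..<q * p}. H n) = (\<Sum>(m, t)\<in>{0..<q} \<times> {0..<p}. H (q * t + m))"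
    by (rule sum.reindex_bij_witness[where j = "\<lambda>n. (n mod q, n div q)" and i = "\<lambda>(m, t). q * t + m"])
      (use q in \<open>auto simp: combine quotient pos_imp_zdiv_nonneg_iff\<close>)
  then show ?thesis by (simp add: sum.cartesian_product)
qed

lemma frame_op_rectangular_tf_shift_window:
  fixes L c b x0 \<omega>0 :: int
  assumes "0 < L" "0 < c" "c dvd L" "b dvd L"
  shows "frame_op L (tf_shift L x0 \<omega>0 g) (mat_lattice L c 0 0 b) f l
       = (\<Sum>t\<in>{0..<L div c}. \<Sum>w\<in>residue_class L b \<omega>0. frame_term L f g l (t * c + x0) w)"
proof -
  let ?F = "frame_term L f g l"
  have "frame_op L (tf_shift L x0 \<omega>0 g) (mat_lattice L c 0 0 b) f l
      = (\<Sum>t\<in>{0..<L div c}. \<Sum>w\<in>residue_class L b 0. ?F (t * c + x0) (w + \<omega>0))"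
    unfolding frame_op_eq_sum frame_term_tf_shift_window
    using sum_mat_lattice_lower_triangular[OF assms, of 0 "\<lambda>x \<omega>. ?F (x + x0) (\<omega> + \<omega>0)"]
    by simp
  also have "\<dots> = (\<Sum>t\<in>{0..<L div c}. \<Sum>w\<in>residue_class L b \<omega>0. ?F (t * c + x0) w)"
    by (intro sum.cong refl sum_residue_class_shift[OF assms(1,4)] frame_term_mod_freq)
  finally show ?thesis .
qed

lemma frame_op_lower_triangular_decomp:
  fixes L a b s q :: int
  assumes L: "0 < L" and a: "0 < a" "a dvd L" and b: "b dvd L"
    and q: "0 < q" "q dvd L div a" "b dvd q * s"
  shows "frame_op L g (mat_lattice L a 0 s b) f l
       = (\<Sum>m\<in>{0..<q}. frame_op L (tf_shift L (m * a) ((m * s) mod b) g) (mat_lattice L (q * a) 0 0 b) f l)"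
proof -
  let ?F = "frame_term L f g l"
  obtain p where p: "L div a = q * p"
    using q(2) by blast
  have L_qa: "L = (q * a) * p"
    using a p by (metis dvd_mult_div_cancel mult.assoc mult.commute)
  have qa: "0 < q * a" "q * a dvd L"
    using a q(1) L_qa by simp_all
  have L_div_qa: "L div (q * a) = p"
    using qa(1) unfolding L_qa by (metis less_irrefl nonzero_mult_div_cancel_left)
  have "b dvd s * (L div a)"
    using dvd_mult2[OF q(3), of p] by (simp add: p ac_simps)
  obtain k where k: "q * s = b * k"
    using q(3) by blast
  have residue_shift: "residue_class L b ((q * t + m) * s) = residue_class L b (m * s)" for t m
  proof -
    have "(q * t + m) * s mod b = (m * s + (q * s) * t) mod b"
      by (simp add: algebra_simps)
    also have "\<dots> = m * s mod b"
      by (simp add: k mult.assoc)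
    finally show ?thesis
      by (metis residue_class_mod)
  qed
  have "frame_op L g (mat_lattice L a 0 s b) f l
      = (\<Sum>n\<in>{0..<q * p}. \<Sum>w\<in>residue_class L b (n * s). ?F (n * a) w)"
    unfolding frame_op_eq_sum sum_mat_lattice_lower_triangular[OF L a b \<open>b dvd s * (L div a)\<close>] p ..
  also have "\<dots> = (\<Sum>m\<in>{0..<q}. \<Sum>t\<in>{0..<p}. \<Sum>w\<in>residue_class L b (m * s). ?F (t * (q * a) + m * a) w)"
    unfolding sum_interval_mult_split[OF q(1)] residue_shift by (simp add: algebra_simps)
  also have "\<dots> = (\<Sum>m\<in>{0..<q}. frame_op L (tf_shift L (m * a) ((m * s) mod b) g) (mat_lattice L (q * a) 0 0 b) f l)"
    unfolding frame_op_rectangular_tf_shift_window[OF L qa b] L_div_qa residue_class_mod ..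
  finally show ?thesis .
qed

lemma div_gcd_mult_eq:
  fixes x y :: int
  shows "x div gcd x y * y = x * (y div gcd x y)"
  by (metis div_mult_swap dvd_div_mult gcd_dvd1 gcd_dvd2)

lemma dvd_mult_of_div_gcd_dvd:
  fixes x y s :: int
  assumes "x div gcd x y dvd s"
  shows "x dvd s * y"
proof -
  have "x dvd x div gcd x y * y"
    by (simp add: div_gcd_mult_eq)
  also have "\<dots> dvd s * y"
    using assms by simp
  finally show ?thesis .
qed

lemma div_gcd_dvd_of_dvd_mult:
  fixes b s c :: int
  assumes "b \<noteq> 0" "b dvd s * c"
  shows "b div gcd b s dvd c"
proof -
  define d where "d = gcd b s"
  have d: "d \<noteq> 0" "d dvd b" "d dvd s"
    using assms(1) by (simp_all add: d_def)
  have "d * (b div d) dvd d * ((s div d) * c)"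
    using assms(2) d by (simp add: mult.assoc[symmetric])
  then have "b div d dvd (s div d) * c"
    using d(1) by (metis dvd_mult_cancel_left)
  moreover have "coprime (b div d) (s div d)"
    unfolding d_def using assms(1) by (rule div_gcd_coprime[OF disjI1])
  ultimately show ?thesis
    unfolding d_def by (simp add: coprime_dvd_mult_right_iff)
qed

theorem proposition3p2:
  fixes L a b s :: int and g :: signal
  assumes L_pos: "0 < L"
    and a_pos: "0 < a"
    and a_dvd: "a dvd L" and b_dvd: "b dvd L"
    and s_nonneg: "0 \<le> s" and s_less: "s < b"
    and s_mult: "(a * b) div gcd (a * b) L dvd s"
  shows "(let Lam = mat_lattice L a 0 s b;
             lam2 = b div gcd b s;
             atil = lam2 * a;
             Lamt = gen_subgroup2 L (atil, 0) (0, b);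
             gm = (\<lambda>m. modul L ((m * s) mod b) (transl L (m * a) g))
         in (\<forall>f. frame_op L g Lam f = (\<lambda>l. \<Sum>m\<in>{0..<lam2}. frame_op L (gm m) Lamt f l))
          \<and> (\<forall>f n k. n \<in> {0..<L div a} \<longrightarrow> k \<in> {0..<L div b} \<longrightarrow>
               (let nt = n div lam2; m = n - lam2 * nt in
                 inner_L L f (modul L (k * b + (m * s) mod b) (transl L (n * a) g))
                 = exp (- 2 * pi * \<i> * of_int nt * of_int atil * of_int ((m * s) mod b) / of_int L)
                   * inner_L L f (modul L (k * b) (transl L (nt * atil) (gm m))))))"
proof -
  define lam where "lam = b div gcd b s"
  have "a * b dvd s * L"
    using s_mult by (rule dvd_mult_of_div_gcd_dvd)
  then have "b dvd s * (L div a)"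
    using a_pos a_dvd by (metis dvd_mult_div_cancel mult.left_commute mult_cancel_left less_irrefl dvd_mult_cancel_left)
  then have lam: "0 < lam" "lam dvd L div a" "b dvd lam * s"
    using s_nonneg s_less unfolding lam_def
    by (auto simp: div_gcd_dvd_of_dvd_mult div_gcd_mult_eq pos_imp_zdiv_pos_iff zdvd_imp_le)
  have decomp: "frame_op L g (mat_lattice L a 0 s b) f
      = (\<lambda>l. \<Sum>m\<in>{0..<lam}. frame_op L (modul L ((m * s) mod b) (transl L (m * a) g))
               (gen_subgroup2 L (lam * a, 0) (0, b)) f l)" for f
    using frame_op_lower_triangular_decomp[OF L_pos a_pos a_dvd b_dvd lam]
    by (simp add: gen_subgroup2_eq_mat_lattice[OF L_pos] tf_shift_def fun_eq_iff)
  have coeff: "inner_L L f (modul L (k * b + (m * s) mod b) (transl L (n * a) g))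
      = exp (- 2 * pi * \<i> * of_int (n div lam) * of_int (lam * a) * of_int ((m * s) mod b) / of_int L)
        * inner_L L f (modul L (k * b) (transl L (n div lam * (lam * a))
            (modul L ((m * s) mod b) (transl L (m * a) g))))"
    if "m = n - lam * (n div lam)" for f n k m
  proof -
    have "n * a = n div lam * (lam * a) + m * a"
      unfolding that by (simp add: algebra_simps)
    then show ?thesis
      using inner_L_modul_transl_split[of L f "k * b" "(m * s) mod b" "n div lam * (lam * a)" "m * a" g]
      by (simp add: mult.assoc)
  qed
  show ?thesis
    unfolding Let_def lam_def[symmetric] using decomp coeff by simp
qed

end
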